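(* Let $m,k,t$ be positive integers with $t<(m-3)/4$, let $C=\{2i+1\mid 1\leq i\leq t\}\cup\{2t+2\}$, and let $c(x)=1+\sum_{j\in C}(x^j+x^{m-j})\in\mathbb{F}_2[x]$. Then $\gcd(c(x^k),x^m-1)=1$ if and only if $\gcd(m,(2t+3)k)=\gcd(m,(2t+1)k)=\gcd(m,3k)=\gcd(m,k)$.
   Context: All polynomials are over $\mathbb{F}_2$. *)

theory Defs
  imports "Berlekamp_Zassenhaus.Finite_Field"
begin

text \<open>The field F_2 is rendered as bool mod_ring (integers modulo CARD(bool) = 2),
  which is an instance of field_gcd, so gcd of polynomials is the usual normalized (monic) gcd.\<close>

type_synonym gf2 = "bool mod_ring"

definition Cset :: "nat \<Rightarrow> nat set" where
  "Cset t = {2*i+1 | i. 1 \<le> i \<and> i \<le> t} \<union> {2*t+2}"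

definition cpoly :: "nat \<Rightarrow> nat \<Rightarrow> gf2 poly" where
  "cpoly m t = 1 + (\<Sum>j\<in>Cset t. monom 1 j + monom 1 (m - j))"

end

theory Submission
  imports Defs
begin

(* Write y = x^k. The heart of the proof is a congruence valid in every commutative ring of
   characteristic 2: modulo y^m - 1,
       y^(2t+2) (y-1)^2 c(y)  ==  (y^(2t+3) - 1) (y^(2t+1) - 1) (y^2 + y + 1),
   obtained by using y^m = 1 to turn y^(m-j) into y^(-j) and letting the factor y^2 + 1 = (y-1)^2
   telescope the resulting sums of odd powers.  Since c(1) = 1, no prime factor q of x^m - 1
   divides both c(y) and y - 1, and q does not divide y; hence q divides c(y) iff q does not divide
   y - 1 but divides y^a - 1 for some a in {2t+3, 2t+1, 3}.  Finally, for odd a the condition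
   gcd(m, ak) = gcd(m, k) says exactly that every prime factor of x^m - 1 dividing x^(ak) - 1
   already divides x^k - 1: one direction is the gcd rule for x^a - 1 and x^b - 1, the other
   produces a separating prime factor of the cofactor (x^h - 1)/(x^g - 1), which is congruent to
   the odd number h/g, i.e. to 1, modulo x^g - 1. *)

lemma char2_diff_eq_add:
  fixes a b :: "'a::ring_1"
  assumes "(2::'a) = 0"
  shows "a - b = a + b"
proof -
  have "a + b = (a - b) + 2 * b" by (simp add: algebra_simps mult_2)
  thus ?thesis using assms by simp
qed

lemma char2_of_nat_odd:
  assumes "(2::'a::comm_ring_1) = 0" and "odd r"
  shows "(of_nat r :: 'a) = 1"
proof -
  obtain s where "r = 2 * s + 1" using \<open>odd r\<close> oddE by blast
  thus ?thesis using assms(1) by simp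
qed

lemma char2_poly:
  assumes "(2::'a::comm_ring_1) = 0"
  shows "(2::'a poly) = 0"
  using assms by (simp add: numeral_poly)

lemma gf2_char2: "(2::gf2) = 0"
  using of_nat_card_eq_0[where 'a=bool] by simp

lemma power_minus_one_dvd:
  fixes x :: "'a::comm_ring_1"
  assumes "h dvd n"
  shows "x ^ h - 1 dvd x ^ n - 1"
proof -
  obtain r where "n = h * r" using assms by blast
  hence "x ^ n - 1 = (x ^ h - 1) * (\<Sum>i<r. (x ^ h) ^ i)"
    by (simp add: power_mult power_diff_1_eq)
  thus ?thesis by simp
qed

lemma dvd_power_minus_one_gcd:
  fixes p x :: "'a::comm_ring_1"
  assumes "p dvd x^a - 1" and "p dvd x^b - 1" and "a > 0"
  shows "p dvd x^gcd a b - 1"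
proof -
  obtain u v where uv: "a * u = b * v + gcd a b"
    using bezout_nat[of a b] assms(3) by auto
  have "p dvd x^(a * u) - 1" "p dvd x^(b * v) - 1"
    using assms(1,2) power_minus_one_dvd[of _ _ x] dvd_trans by (metis dvd_triv_left)+
  hence "p dvd (x^(a * u) - 1) - (x^(b * v) - 1) * x^gcd a b"
    by (simp add: dvd_mult2)
  also have "(x^(a * u) - 1) - (x^(b * v) - 1) * x^gcd a b = x^gcd a b - 1"
    unfolding uv by (simp add: power_add algebra_simps)
  finally show ?thesis .
qed

lemma geometric_sum_cong:
  fixes x :: "'a::comm_ring_1"
  shows "x - 1 dvd (\<Sum>i<r. x^i) - of_nat r"
proof -
  have "(\<Sum>i<r. x^i) - of_nat r = (\<Sum>i<r. x^i - 1)"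
    by (simp add: sum_subtractf)
  also have "x - 1 dvd \<dots>"
    using power_minus_one_dvd[of 1 _ x] by (intro dvd_sum) simp
  finally show ?thesis .
qed

lemma degree_x_power_minus_one:
  assumes "n > 0"
  shows "degree (monom 1 1 ^ n - 1 :: 'a::comm_ring_1 poly) = n"
proof -
  have "degree (monom 1 n + (- 1) :: 'a poly) = degree (monom 1 n :: 'a poly)"
    using assms by (intro degree_add_eq_left) (simp add: degree_monom_eq)
  thus ?thesis unfolding x_pow_n using assms by (simp add: degree_monom_eq)
qed

lemma coprime_iff_no_common_prime:
  fixes a b :: "'a::factorial_semiring"
  assumes "b \<noteq> 0"
  shows "coprime a b \<longleftrightarrow> (\<forall>p. prime p \<longrightarrow> p dvd b \<longrightarrow> \<not> p dvd a)"
proof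
  assume "coprime a b"
  thus "\<forall>p. prime p \<longrightarrow> p dvd b \<longrightarrow> \<not> p dvd a"
    using coprime_common_divisor not_prime_unit by blast
next
  assume no_prime: "\<forall>p. prime p \<longrightarrow> p dvd b \<longrightarrow> \<not> p dvd a"
  show "coprime a b"
  proof (rule ccontr)
    assume "\<not> coprime a b"
    then obtain c where c: "c dvd a" "c dvd b" "\<not> is_unit c" by (rule not_coprimeE)
    have "c \<noteq> 0" using c(2) assms by auto
    then obtain p where "p dvd c" "prime p" using prime_divisor_exists c(3) by blast
    thus False using no_prime c(1,2) dvd_trans by blast
  qed
qed

lemma Cset_sum: "(\<Sum>j\<in>Cset t. h j) = (\<Sum>i<t. h (2*i+3)) + h (2*t+2)"
proof -
  have odd_part: "{2*i+1 | i. 1 \<le> i \<and> i \<le> t} = (\<lambda>i. 2*i+3) ` {..<t}"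
  proof (intro equalityI subsetI)
    fix x assume "x \<in> {2*i+1 | i. 1 \<le> i \<and> i \<le> t}"
    then obtain i where "x = 2*i+1" "1 \<le> i" "i \<le> t" by auto
    thus "x \<in> (\<lambda>i. 2*i+3) ` {..<t}" by (intro image_eqI[of _ _ "i-1"]) auto
  next
    fix x assume "x \<in> (\<lambda>i. 2*i+3) ` {..<t}"
    then obtain i where "x = 2*i+3" "i < t" by auto
    thus "x \<in> {2*i+1 | i. 1 \<le> i \<and> i \<le> t}" by (intro CollectI exI[of _ "i+1"]) auto
  qed
  have "(\<Sum>j\<in>Cset t. h j) = (\<Sum>j\<in>(\<lambda>i. 2*i+3) ` {..<t}. h j) + h (2*t+2)"
    unfolding Cset_def odd_part by (subst sum.union_disjoint) auto
  also have "(\<Sum>j\<in>(\<lambda>i. 2*i+3) ` {..<t}. h j) = (\<Sum>i<t. h (2*i+3))"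
    by (subst sum.reindex) (auto simp: inj_on_def)
  finally show ?thesis .
qed

(* Every element of C is at most 2t+2, so y^(2t+2-j) below is an honest power. *)
lemma Cset_le: "j \<in> Cset t \<Longrightarrow> j \<le> 2*t+2"
  unfolding Cset_def by auto

definition c_eval :: "nat \<Rightarrow> nat \<Rightarrow> 'a::comm_ring_1 \<Rightarrow> 'a" where
  "c_eval m t y = 1 + (\<Sum>j\<in>Cset t. y^j + y^(m-j))"

lemma pcompose_cpoly: "pcompose (cpoly m t) q = c_eval m t q"
  unfolding cpoly_def c_eval_def
  by (simp add: pcompose_add pcompose_sum monom_altdef pcompose_hom.hom_power)

lemma c_eval_cong_one:
  fixes y :: "'a::comm_ring_1"
  assumes char2: "(2::'a) = 0"
  shows "y - 1 dvd c_eval m t y - 1"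
proof -
  have pair: "y^a + y^b = (y^a - 1) + (y^b - 1)" for a b
    using char2 by (simp add: algebra_simps)
  have "c_eval m t y - 1 = (\<Sum>j\<in>Cset t. (y^j - 1) + (y^(m-j) - 1))"
    unfolding c_eval_def by (simp only: pair[symmetric]) simp
  also have "y - 1 dvd \<dots>"
    using power_minus_one_dvd[of 1 _ y] by (intro dvd_sum dvd_add) simp_all
  finally show ?thesis .
qed

lemma c_eval_shifted:
  fixes y :: "'a::comm_ring_1"
  assumes "2*t+2 \<le> m"
  shows "y^m - 1 dvd y^(2*t+2) * c_eval m t y
           - (y^(2*t+2) + (\<Sum>j\<in>Cset t. y^(2*t+2+j) + y^(2*t+2-j)))"
proof -
  define n where "n = 2*t+2"
  have "y^n * (y^j + y^(m-j)) = y^(n+j) + y^m * y^(n-j)" if "j \<in> Cset t" for j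
  proof -
    have "n + (m-j) = m + (n-j)" using Cset_le[OF that] assms n_def by simp
    thus ?thesis by (metis distrib_left power_add)
  qed
  hence "y^n * c_eval m t y = y^n + (\<Sum>j\<in>Cset t. y^(n+j) + y^m * y^(n-j))"
    unfolding c_eval_def distrib_left sum_distrib_left by simp
  hence "y^n * c_eval m t y - (y^n + (\<Sum>j\<in>Cset t. y^(n+j) + y^(n-j)))
      = (y^m - 1) * (\<Sum>j\<in>Cset t. y^(n-j))"
    by (simp add: sum.distrib sum_distrib_left sum_subtractf algebra_simps)
  thus ?thesis unfolding n_def by (metis dvd_triv_left)
qed

(* In characteristic 2 the factor y^2 + 1 telescopes the shifted sum into a product of three
   binomials; the two sums of odd powers are geometric series in y^2. *)
lemma c_eval_shifted_folded:
  fixes y :: "'a::comm_ring_1"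
  assumes char2: "(2::'a) = 0"
  shows "(y^2+1) * (y^(2*t+2) + (\<Sum>j\<in>Cset t. y^(2*t+2+j) + y^(2*t+2-j)))
           = (y^(2*t+3)+1) * (y^(2*t+1)+1) * (y^2+y+1)"
proof -
  define Z where "Z = (y^2)^t"
  define G where "G = (\<Sum>i<t. (y^2)^i)"
  have geometric: "(y^2+1) * G = Z + 1"
    using power_diff_1_eq[of "y^2" t] unfolding Z_def G_def char2_diff_eq_add[OF char2] by simp
  have upper: "(\<Sum>i<t. y^(2*t+2+(2*i+3))) = y^5 * Z * G"
  proof -
    have "y^(2*t+2+(2*i+3)) = y^5 * Z * (y^2)^i" for i
    proof -
      have "2*t+2+(2*i+3) = 5 + 2*t + 2*i" by simp
      thus ?thesis unfolding Z_def by (simp only: power_add power_mult)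
    qed
    thus ?thesis unfolding G_def sum_distrib_left by simp
  qed
  have lower: "(\<Sum>i<t. y^(2*t+2-(2*i+3))) = y * G"
  proof -
    have "(\<Sum>i<t. y^(2*t+2-(2*i+3))) = (\<Sum>i<t. y^(2*(t - Suc i)+1))"
      by (intro sum.cong refl arg_cong[where f="power y"]) simp
    also have "\<dots> = (\<Sum>i<t. y^(2*i+1))" by (rule sum.nat_diff_reindex)
    also have "\<dots> = y * G" unfolding G_def sum_distrib_left
      by (simp only: Suc_eq_plus1[symmetric] power_Suc power_mult)
    finally show ?thesis .
  qed
  have ends: "y^(2*t+2) = y^2 * Z" "y^(2*t+2+(2*t+2)) = y^4 * Z^2"
      "y^(2*t+3) = y^3 * Z" "y^(2*t+1) = y * Z"
    unfolding Z_def by (simp_all only: flip: power_add power_mult power_Suc)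
      (intro arg_cong[where f="power y"]; simp)+
  have "(y^2+1) * (y^(2*t+2) + (\<Sum>j\<in>Cset t. y^(2*t+2+j) + y^(2*t+2-j)))
      = (y^2+1) * (y^2*Z + (y^5*Z*G + y*G) + (y^4*Z^2 + 1))"
    unfolding Cset_sum sum.distrib upper lower ends by (simp add: add_ac)
  also have "\<dots> = (y^2+1) * (y^2*Z + y^4*Z^2 + 1) + (y^5*Z + y) * ((y^2+1) * G)"
    by (simp add: algebra_simps)
  (* over any commutative ring the two sides differ only by the cross term 2 y^3 Z *)
  also have "\<dots> = (y^3*Z+1) * (y*Z+1) * (y^2+y+1) - 2 * (y^3*Z)"
    unfolding geometric by (simp add: algebra_simps eval_nat_numeral)
  also have "\<dots> = (y^3*Z+1) * (y*Z+1) * (y^2+y+1)"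
    using char2 by simp
  finally show ?thesis unfolding ends .
qed

lemma key_congruence:
  fixes y :: "'a::comm_ring_1"
  assumes char2: "(2::'a) = 0" and "2*t+2 \<le> m"
  shows "y^m - 1 dvd y^(2*t+2) * (y-1)^2 * c_eval m t y
           - (y^(2*t+3)-1) * (y^(2*t+1)-1) * (y^2+y+1)"
proof -
  define A where "A = y^(2*t+2) + (\<Sum>j\<in>Cset t. y^(2*t+2+j) + y^(2*t+2-j))"
  have square: "(y-1)^2 = y^2+1"
    using char2 by (simp add: power2_diff)
  have folded: "(y^(2*t+3)-1) * (y^(2*t+1)-1) * (y^2+y+1) = (y^2+1) * A"
    unfolding A_def c_eval_shifted_folded[OF char2] char2_diff_eq_add[OF char2] ..
  have "y^(2*t+2) * (y-1)^2 * c_eval m t y - (y^(2*t+3)-1) * (y^(2*t+1)-1) * (y^2+y+1)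
      = (y^2+1) * (y^(2*t+2) * c_eval m t y - A)"
    unfolding square folded by (simp add: algebra_simps)
  thus ?thesis
    using c_eval_shifted[OF assms(2), of y] unfolding A_def by simp
qed

lemma prime_dvd_c_eval_iff:
  fixes y q :: "'a::{comm_ring_1,normalization_semidom}"
  assumes char2: "(2::'a) = 0" and "2*t+2 \<le> m" and "m > 0"
    and q: "prime q" "q dvd y^m - 1"
  shows "q dvd c_eval m t y \<longleftrightarrow>
    \<not> q dvd y - 1 \<and> (q dvd y^(2*t+3) - 1 \<or> q dvd y^(2*t+1) - 1 \<or> q dvd y^3 - 1)"
proof -
  define R where "R = (y^(2*t+3)-1) * (y^(2*t+1)-1) * (y^2+y+1)"
  have not_unit: "\<not> q dvd 1" using q(1) by simp
  have "\<not> q dvd y"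
  proof
    assume "q dvd y"
    hence "q dvd y^m" using dvd_power[of m y] \<open>m > 0\<close> dvd_trans by blast
    thus False using q(2) not_unit dvd_diff_right_iff by blast
  qed
  have "q dvd y^(2*t+2) * (y-1)^2 * c_eval m t y - R"
    using q(2) key_congruence[OF char2 assms(2), of y] unfolding R_def by (rule dvd_trans)
  hence shifted_iff_R: "q dvd y^(2*t+2) * (y-1)^2 * c_eval m t y \<longleftrightarrow> q dvd R"
    by (metis dvd_diff_left_iff dvd_diff_right_iff)
  have cube: "y^3 - 1 = (y-1) * (y^2+y+1)"
    by (simp add: algebra_simps eval_nat_numeral)
  have R_iff: "q dvd R \<longleftrightarrow> q dvd y^(2*t+3) - 1 \<or> q dvd y^(2*t+1) - 1 \<or> q dvd y^3 - 1"
    if "\<not> q dvd y - 1"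
    unfolding R_def cube using that by (simp add: prime_dvd_mult_iff[OF q(1)])
  show ?thesis
  proof
    assume c: "q dvd c_eval m t y"
    have "\<not> q dvd y - 1"
    proof
      assume "q dvd y - 1"
      hence "q dvd c_eval m t y - 1" using c_eval_cong_one[OF char2] dvd_trans by blast
      thus False using c not_unit dvd_diff_right_iff by blast
    qed
    moreover have "q dvd R" using c shifted_iff_R by simp
    ultimately show "\<not> q dvd y - 1 \<and> (q dvd y^(2*t+3) - 1 \<or> q dvd y^(2*t+1) - 1 \<or> q dvd y^3 - 1)"
      using R_iff by blast
  next
    assume "\<not> q dvd y - 1 \<and> (q dvd y^(2*t+3) - 1 \<or> q dvd y^(2*t+1) - 1 \<or> q dvd y^3 - 1)"
    hence "\<not> q dvd y - 1" "q dvd y^(2*t+2) * (y-1)^2 * c_eval m t y"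
      using R_iff shifted_iff_R by blast+
    moreover have "\<not> q dvd y^(2*t+2)" "\<not> q dvd (y-1)^2"
      using \<open>\<not> q dvd y\<close> \<open>\<not> q dvd y - 1\<close> prime_dvd_power[OF q(1)] by blast+
    ultimately show "q dvd c_eval m t y"
      using prime_dvd_mult_iff[OF q(1)] by blast
  qed
qed

(* If gcd(m, ak) differs from gcd(m, k) for odd a, some prime factor of gcd(x^m - 1, x^(ak) - 1)
   does not divide x^k - 1: take one of the cofactor (x^h - 1)/(x^g - 1), which is 1 mod x^g - 1. *)
lemma prime_divisor_separating:
  fixes m k a :: nat
  assumes char2: "(2::'a::field_gcd) = 0"
    and "odd a" and "gcd m (a*k) \<noteq> gcd m k" and "m > 0"
  obtains q :: "'a::field_gcd poly" where "prime q" "q dvd monom 1 1 ^ m - 1"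
    "q dvd monom 1 1 ^ (a*k) - 1" "\<not> q dvd monom 1 1 ^ k - 1"
proof -
  define X :: "'a poly" where "X = monom 1 1"
  define g where "g = gcd m k"
  define h where "h = gcd m (a*k)"
  have "g > 0" using assms(4) g_def by simp
  have "g dvd h" unfolding g_def h_def by (rule gcd_greatest) auto
  then obtain r where hr: "h = g * r" by blast
  have "h dvd gcd (a*m) (a*k)" unfolding h_def by (rule gcd_greatest) auto
  hence "g * r dvd g * a" unfolding hr g_def by (simp add: gcd_mult_distrib_nat mult.commute)
  hence "r dvd a" using \<open>g > 0\<close> by simp
  hence "odd r" using \<open>odd a\<close> dvd_trans by blast
  have "r \<noteq> 1" using hr assms(3) g_def h_def by auto
  have "r > 0" using \<open>odd r\<close> by (cases r) auto
  define Q where "Q = (\<Sum>i<r. (X^g)^i)"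
  have factor: "X^h - 1 = (X^g - 1) * Q"
    unfolding Q_def hr power_mult by (rule power_diff_1_eq)
  have degrees: "degree (X^h - 1) = h" "degree (X^g - 1) = g"
    unfolding X_def using degree_x_power_minus_one[of h] degree_x_power_minus_one[of g]
      hr \<open>g > 0\<close> \<open>r > 0\<close> by simp_all
  have "Q \<noteq> 0" "X^g - 1 \<noteq> 0"
    using factor degrees hr \<open>g > 0\<close> \<open>r > 0\<close> by auto
  have "\<not> is_unit Q"
  proof
    assume "is_unit Q"
    hence "degree Q = 0" using \<open>Q \<noteq> 0\<close> is_unit_iff_degree by blast
    have "h = degree ((X^g - 1) * Q)" using degrees(1) factor by simp
    also have "\<dots> = g"
      using degree_mult_eq[OF \<open>X^g - 1 \<noteq> 0\<close> \<open>Q \<noteq> 0\<close>] degrees(2) \<open>degree Q = 0\<close> by simp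
    finally show False using hr \<open>r \<noteq> 1\<close> \<open>g > 0\<close> by simp
  qed
  then obtain q where "prime q" "q dvd Q" using prime_divisor_exists \<open>Q \<noteq> 0\<close> by blast
  hence "q dvd X^h - 1" using factor by simp
  moreover have "h dvd m" "h dvd a*k" unfolding h_def by auto
  ultimately have "q dvd X^m - 1" "q dvd X^(a*k) - 1"
    using power_minus_one_dvd dvd_trans by blast+
  moreover have "\<not> q dvd X^k - 1"
  proof
    assume "q dvd X^k - 1"
    hence "q dvd X^g - 1"
      unfolding g_def using dvd_power_minus_one_gcd[OF \<open>q dvd X^m - 1\<close> _ assms(4)] by blast
    moreover have "X^g - 1 dvd Q - 1"
      using geometric_sum_cong[of "X^g" r] char2_of_nat_odd[OF char2_poly[OF char2] \<open>odd r\<close>]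
      unfolding Q_def by simp
    ultimately have "q dvd Q - 1" by (rule dvd_trans)
    hence "q dvd 1" using dvd_diff_right_iff[OF \<open>q dvd Q\<close>] by blast
    thus False using \<open>prime q\<close> not_prime_unit by blast
  qed
  ultimately show ?thesis using that \<open>prime q\<close> unfolding X_def by blast
qed

lemma odd_multiple_gcd_iff:
  fixes m k a :: nat
  assumes char2: "(2::'a::field_gcd) = 0" and "odd a" and "m > 0"
  shows "gcd m (a*k) = gcd m k \<longleftrightarrow>
    (\<forall>q :: 'a poly. prime q \<longrightarrow> q dvd monom 1 1 ^ m - 1 \<longrightarrow>
       q dvd monom 1 1 ^ (a*k) - 1 \<longrightarrow> q dvd monom 1 1 ^ k - 1)"
proof
  assume gcd_eq: "gcd m (a*k) = gcd m k"
  show "\<forall>q :: 'a poly. prime q \<longrightarrow> q dvd monom 1 1 ^ m - 1 \<longrightarrow>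
       q dvd monom 1 1 ^ (a*k) - 1 \<longrightarrow> q dvd monom 1 1 ^ k - 1"
  proof (intro allI impI)
    fix q :: "'a poly"
    assume "q dvd monom 1 1 ^ m - 1" "q dvd monom 1 1 ^ (a*k) - 1"
    hence "q dvd monom 1 1 ^ gcd m k - 1"
      using dvd_power_minus_one_gcd \<open>m > 0\<close> gcd_eq by metis
    thus "q dvd monom 1 1 ^ k - 1"
      using power_minus_one_dvd[of "gcd m k" k] dvd_trans by blast
  qed
qed (use prime_divisor_separating[OF assms(1,2) _ assms(3)] in blast)

lemma prime_dvd_c_eval_x_power_iff:
  fixes q :: "'a::field_gcd poly"
  defines "X \<equiv> monom 1 1 :: 'a poly"
  assumes char2: "(2::'a) = 0" and "2*t+2 \<le> m" and "m > 0"
    and q: "prime q" "q dvd X^m - 1"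
  shows "q dvd c_eval m t (X^k) \<longleftrightarrow> \<not> q dvd X^k - 1 \<and>
    (q dvd X^((2*t+3)*k) - 1 \<or> q dvd X^((2*t+1)*k) - 1 \<or> q dvd X^(3*k) - 1)"
proof -
  have powers: "(X^k)^a = X^(a*k)" for a by (simp add: power_mult[symmetric] mult.commute)
  have "X^m - 1 dvd (X^k)^m - 1" unfolding powers by (rule power_minus_one_dvd) simp
  with q(2) have "q dvd (X^k)^m - 1" by (rule dvd_trans)
  from prime_dvd_c_eval_iff[OF char2_poly[OF char2] assms(3,4) q(1) this]
  show ?thesis unfolding powers .
qed

theorem proposition9:
  fixes m k t :: nat
  assumes "m > 0" and "k > 0" and "t > 0"
    and "real t < (real m - 3) / 4"
  shows "gcd (pcompose (cpoly m t) (monom 1 k)) (monom 1 m - 1) = 1 \<longleftrightarrow>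
    (gcd m ((2*t+3)*k) = gcd m k \<and> gcd m ((2*t+1)*k) = gcd m k \<and> gcd m (3*k) = gcd m k)"
proof -
  define X :: "gf2 poly" where "X = monom 1 1"
  define P where "P = c_eval m t (X^k)"
  have "real (2*t+2) \<le> real m" using assms(4) by (simp add: field_simps)
  hence "2*t+2 \<le> m" by (simp only: of_nat_le_iff)
  have poly_eqs: "pcompose (cpoly m t) (monom 1 k) = P" "monom 1 m - 1 = X^m - 1"
    unfolding P_def X_def x_pow_n pcompose_cpoly by simp_all
  have "degree (X^m - 1) = m" unfolding X_def by (rule degree_x_power_minus_one[OF assms(1)])
  hence "X^m - 1 \<noteq> 0" using assms(1) by (metis degree_0 less_irrefl)
  define reduces :: "nat \<Rightarrow> bool" where "reduces a \<longleftrightarrow>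
    (\<forall>q. prime q \<longrightarrow> q dvd X^m - 1 \<longrightarrow> q dvd X^(a*k) - 1 \<longrightarrow> q dvd X^k - 1)" for a
  have reduces_iff: "reduces a \<longleftrightarrow> gcd m (a*k) = gcd m k" if "odd a" for a
    unfolding reduces_def X_def using odd_multiple_gcd_iff[OF gf2_char2 that assms(1)] by simp
  have "gcd P (X^m - 1) = 1 \<longleftrightarrow> (\<forall>q. prime q \<longrightarrow> q dvd X^m - 1 \<longrightarrow> \<not> q dvd P)"
    using coprime_iff_no_common_prime[OF \<open>X^m - 1 \<noteq> 0\<close>] by (simp add: coprime_iff_gcd_eq_1)
  also have "\<dots> \<longleftrightarrow> reduces (2*t+3) \<and> reduces (2*t+1) \<and> reduces 3"
    using prime_dvd_c_eval_x_power_iff[OF gf2_char2 \<open>2*t+2 \<le> m\<close> assms(1)]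
    unfolding reduces_def P_def X_def by blast
  also have "\<dots> \<longleftrightarrow> gcd m ((2*t+3)*k) = gcd m k \<and> gcd m ((2*t+1)*k) = gcd m k \<and> gcd m (3*k) = gcd m k"
    using reduces_iff[of "2*t+3"] reduces_iff[of "2*t+1"] reduces_iff[of 3] by simp
  finally show ?thesis unfolding poly_eqs .
qed

end
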